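(* Let $A\in\mathbb{R}^{M\times N}$ be a deterministic matrix with $m$th row $a_m^T$. Let $x\sim\mathcal{N}(0_{N\times1},\sigma_x^2I_N)$, $e^z\sim\mathcal{N}(0_{M\times1},C_{e^z})$, and $e^y\sim\mathcal{N}(\bar e^y,C_{e^y})$ be real Gaussian vectors, with $x,e^z,e^y$ independent. Let $y=(Ax+e^z)^2+e^y\in\mathbb{R}^M$ (entrywise square), and use the identity preprocessing $\mathcal{T}(y)=y$. Define $$C_z=\sigma_x^2AA^T+C_{e^z},\quad\bar y=\mathrm{diag}(C_z)+\bar e^y,\quad T=2C_z\odot C_z+C_{e^y},$$ assume $T$ is invertible, let $t\in\mathbb{R}^M$ solve $Tt=y-\bar y$, and let $V_m=2\sigma_x^4a_ma_m^T$, $m=1,\dots,M$. Then the matrix of the form $W_0+\sum_{m=1}^My_mW_m$ ($W_m\in\mathbb{R}^{N\times N}$) minimizing $\mathbb{E}[\|W_0+\sum_my_mW_m-xx^T\|_F^2]$ is $$D_y^{\mathbb{R}}=\sigma_x^2I_N+\sum_{m=1}^Mt_mV_m,$$ and its spectral MSE is $$\mathbb{E}\big[\|D^{\mathbb{R}}_y-xx^T\|_F^2\big]=\mathbb{E}\big[\|xx^T-\sigma_x^2I_N\|_F^2\big]-\sum_{m=1}^M\sum_{m'=1}^M[T^{-1}]_{m,m'}\mathrm{tr}\big(V_m^TV_{m'}\big).$$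
   Context: $\odot$ is the entrywise product and $\mathrm{diag}(C)$ the vector of diagonal entries. Expectations are over $x,e^z,e^y$. The linear spectral estimate is a scaled leading eigenvector of $D_y^{\mathbb{R}}$. *)

theory Defs
  imports "HOL-Probability.Probability"
begin

definition real_gaussian :: "'s measure \<Rightarrow> ('s \<Rightarrow> real) \<Rightarrow> real \<Rightarrow> real \<Rightarrow> bool" where
  "real_gaussian M Y mu v \<longleftrightarrow>
     Y \<in> borel_measurable M \<and>
     ((v = 0 \<and> (AE \<omega> in M. Y \<omega> = mu)) \<or>
      (v > 0 \<and> distributed M lborel Y (normal_density mu (sqrt v))))"

definition gaussian_vec :: "'s measure \<Rightarrow> ('s \<Rightarrow> real^'k) \<Rightarrow> real^'k \<Rightarrow> real^'k^'k \<Rightarrow> bool" where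
  "gaussian_vec M X mu C \<longleftrightarrow>
     X \<in> borel_measurable M \<and> transpose C = C \<and>
     (\<forall>u. real_gaussian M (\<lambda>\<omega>. u \<bullet> X \<omega>) (u \<bullet> mu) (u \<bullet> (C *v u)))"

definition indep3 :: "'s measure \<Rightarrow> ('s \<Rightarrow> 'a::topological_space) \<Rightarrow> ('s \<Rightarrow> 'b::topological_space)
                      \<Rightarrow> ('s \<Rightarrow> 'c::topological_space) \<Rightarrow> bool" where
  "indep3 M X Y Z \<longleftrightarrow>
     (\<forall>A\<in>sets borel. \<forall>B\<in>sets borel. \<forall>C\<in>sets borel.
        measure M {\<omega>\<in>space M. X \<omega> \<in> A \<and> Y \<omega> \<in> B \<and> Z \<omega> \<in> C}
        = measure M {\<omega>\<in>space M. X \<omega> \<in> A} * measure M {\<omega>\<in>space M. Y \<omega> \<in> B}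
          * measure M {\<omega>\<in>space M. Z \<omega> \<in> C})"

definition outer :: "real^'k \<Rightarrow> real^'l \<Rightarrow> real^'l^'k" where
  "outer a b = (\<chi> i j. a $ i * b $ j)"

definition frob_sq :: "real^'l^'k \<Rightarrow> real" where
  "frob_sq B = (\<Sum>i\<in>UNIV. \<Sum>j\<in>UNIV. (B $ i $ j)^2)"

end

theory Submission
  imports Defs
begin

text \<open>
  Each entry F = x_i x_j of x x^T is estimated separately from y. For a scalar target F with
  E F = f0 and Cov(F, y_m) = v_m, the affine estimator f0 + v^T T^-1 (y - E y) has an error
  that is orthogonal to 1 and to every y_m, hence to every affine function of y; Pythagoras
  then shows that it minimises the mean squared error among affine estimators, with error
  Var F - v^T T^-1 v. Summing over the entries gives the matrix statement, provided
  Cov(y) = T and Cov(x x^T, y_m) = V_m.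

  These covariances are moments of order at most four of z = A x + e^z, x and e^y. Every
  coordinate of x and of z is a statistic u . x + w . e^z, the sum of two independent centred
  Gaussians, whose second and fourth moments follow from the binomial expansion. Polarizing
  them (Isserlis' theorem up to order four) gives E[z_m^2 z_k^2] = Cz_mm Cz_kk + 2 Cz_mk^2 and
  E[x_i x_j z_m^2] = sigma^2 delta_ij Cz_mm + 2 sigma^4 A_mi A_mj, and independence of e^y
  accounts for the remaining terms.
\<close>

section \<open>Square-integrable random variables\<close>

context prob_space
begin

definition square_integrable :: "('a \<Rightarrow> real) \<Rightarrow> bool" where
  "square_integrable X \<longleftrightarrow> X \<in> borel_measurable M \<and> integrable M (\<lambda>\<omega>. (X \<omega>)\<^sup>2)"

lemma square_integrable_const [simp]: "square_integrable (\<lambda>_. c)"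
  by (simp add: square_integrable_def)

lemma square_integrable_imp_integrable: "square_integrable X \<Longrightarrow> integrable M X"
  unfolding square_integrable_def by (blast intro: square_integrable_imp_integrable)

lemma integrable_mult_square_integrable:
  assumes "square_integrable X" "square_integrable Y"
  shows "integrable M (\<lambda>\<omega>. X \<omega> * Y \<omega>)"
proof (rule Bochner_Integration.integrable_bound)
  show "integrable M (\<lambda>\<omega>. (X \<omega>)\<^sup>2 + (Y \<omega>)\<^sup>2)"
    using assms by (auto simp: square_integrable_def)
  show "(\<lambda>\<omega>. X \<omega> * Y \<omega>) \<in> borel_measurable M"
    using assms by (auto simp: square_integrable_def)
  have "\<bar>a * b\<bar> \<le> a\<^sup>2 + b\<^sup>2" for a b :: real
  proof -
    have "2 * (\<bar>a\<bar> * \<bar>b\<bar>) \<le> a\<^sup>2 + b\<^sup>2" "0 \<le> \<bar>a\<bar> * \<bar>b\<bar>"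
      using sum_squares_bound[of "\<bar>a\<bar>" "\<bar>b\<bar>"] by (simp_all add: mult.assoc)
    then show ?thesis
      unfolding abs_mult by linarith
  qed
  then show "AE \<omega> in M. norm (X \<omega> * Y \<omega>) \<le> norm ((X \<omega>)\<^sup>2 + (Y \<omega>)\<^sup>2)"
    by simp
qed

lemma square_integrable_add [intro]:
  assumes "square_integrable X" "square_integrable Y"
  shows "square_integrable (\<lambda>\<omega>. X \<omega> + Y \<omega>)"
proof -
  have "integrable M (\<lambda>\<omega>. (X \<omega>)\<^sup>2 + (Y \<omega>)\<^sup>2 + 2 * (X \<omega> * Y \<omega>))"
    using assms integrable_mult_square_integrable[OF assms] by (auto simp: square_integrable_def)
  then show ?thesis
    using assms by (simp add: square_integrable_def power2_sum mult.assoc borel_measurable_add)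
qed

lemma square_integrable_cmult [intro]:
  "square_integrable X \<Longrightarrow> square_integrable (\<lambda>\<omega>. c * X \<omega>)"
  by (simp add: square_integrable_def power_mult_distrib borel_measurable_times)

lemma square_integrable_diff [intro]:
  assumes "square_integrable X" "square_integrable Y"
  shows "square_integrable (\<lambda>\<omega>. X \<omega> - Y \<omega>)"
  using square_integrable_add[OF assms(1) square_integrable_cmult[OF assms(2), of "-1"]] by simp

lemma square_integrable_sum [intro]:
  "(\<And>i. i \<in> I \<Longrightarrow> square_integrable (X i)) \<Longrightarrow> square_integrable (\<lambda>\<omega>. \<Sum>i\<in>I. X i \<omega>)"
  by (induction I rule: infinite_finite_induct) auto

lemma square_integrable_mult:
  assumes "square_integrable (\<lambda>\<omega>. (X \<omega>)\<^sup>2)" "square_integrable (\<lambda>\<omega>. (Y \<omega>)\<^sup>2)"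
    and "X \<in> borel_measurable M" "Y \<in> borel_measurable M"
  shows "square_integrable (\<lambda>\<omega>. X \<omega> * Y \<omega>)"
  using integrable_mult_square_integrable[OF assms(1,2)] assms(3,4)
  by (simp add: square_integrable_def power_mult_distrib)

lemma square_integrable_power2:
  "X \<in> borel_measurable M \<Longrightarrow> integrable M (\<lambda>\<omega>. (X \<omega>)^4) \<Longrightarrow> square_integrable (\<lambda>\<omega>. (X \<omega>)\<^sup>2)"
  by (simp add: square_integrable_def flip: power_mult)

lemma expectation_mult_lincomb:
  assumes "square_integrable G" "\<And>i. i \<in> I \<Longrightarrow> square_integrable (Z i)"
  shows "expectation (\<lambda>\<omega>. G \<omega> * (c + (\<Sum>i\<in>I. a i * Z i \<omega>)))
           = c * expectation G + (\<Sum>i\<in>I. a i * expectation (\<lambda>\<omega>. G \<omega> * Z i \<omega>))"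
proof -
  have "(\<lambda>\<omega>. G \<omega> * (c + (\<Sum>i\<in>I. a i * Z i \<omega>))) = (\<lambda>\<omega>. c * G \<omega> + (\<Sum>i\<in>I. a i * (G \<omega> * Z i \<omega>)))"
    by (simp add: algebra_simps sum_distrib_left)
  moreover have "integrable M (\<lambda>\<omega>. a i * (G \<omega> * Z i \<omega>))" if "i \<in> I" for i
    using integrable_mult_square_integrable[OF assms(1) assms(2)[OF that]] by simp
  ultimately show ?thesis
    using square_integrable_imp_integrable[OF assms(1)] by simp
qed

lemma integrable_frob_sq:
  assumes "\<And>i j. square_integrable (\<lambda>\<omega>. X \<omega> $ i $ j)"
  shows "integrable M (\<lambda>\<omega>. frob_sq (X \<omega>))"
  using assms by (simp add: frob_sq_def square_integrable_def)

lemma expectation_frob_sq: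
  assumes "\<And>i j. square_integrable (\<lambda>\<omega>. X \<omega> $ i $ j)"
  shows "expectation (\<lambda>\<omega>. frob_sq (X \<omega>)) = (\<Sum>i\<in>UNIV. \<Sum>j\<in>UNIV. expectation (\<lambda>\<omega>. (X \<omega> $ i $ j)\<^sup>2))"
  using assms by (simp add: frob_sq_def square_integrable_def Bochner_Integration.integral_sum)

end

section \<open>Linear minimum mean squared error estimation\<close>

lemma frob_sq_nonneg: "0 \<le> frob_sq B"
  unfolding frob_sq_def by (intro sum_nonneg) auto

lemma frob_sq_eq_0_iff: "frob_sq B = 0 \<longleftrightarrow> B = 0"
  unfolding frob_sq_def by (simp add: sum_nonneg_eq_0_iff sum_nonneg vec_eq_iff)

lemma trace_transpose_mult:
  fixes A B :: "'a::comm_semiring_1^'l^'k"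
  shows "trace (transpose A ** B) = (\<Sum>i\<in>UNIV. \<Sum>j\<in>UNIV. A $ i $ j * B $ i $ j)"
proof -
  have "trace (transpose A ** B) = (\<Sum>j\<in>UNIV. \<Sum>i\<in>UNIV. A $ i $ j * B $ i $ j)"
    by (simp add: trace_def matrix_matrix_mult_def transpose_def)
  also have "\<dots> = (\<Sum>i\<in>UNIV. \<Sum>j\<in>UNIV. A $ i $ j * B $ i $ j)"
    by (rule sum.swap)
  finally show ?thesis .
qed

lemma sum_mult_sum_swap:
  fixes a :: "'i \<Rightarrow> 'a::comm_semiring_1"
  shows "(\<Sum>l\<in>L. (\<Sum>m\<in>K. a m * b m l) * c l) = (\<Sum>m\<in>K. a m * (\<Sum>l\<in>L. b m l * c l))"
  by (simp add: sum_distrib_left sum_distrib_right mult.assoc) (rule sum.swap)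

lemma sum_swap_nested:
  "(\<Sum>a\<in>A. \<Sum>b\<in>B. \<Sum>c\<in>C. \<Sum>d\<in>D. f a b c d) = (\<Sum>c\<in>C. \<Sum>d\<in>D. \<Sum>a\<in>A. \<Sum>b\<in>B. f a b c d)"
proof -
  have "(\<Sum>a\<in>A. \<Sum>b\<in>B. \<Sum>c\<in>C. \<Sum>d\<in>D. f a b c d) = (\<Sum>a\<in>A. \<Sum>c\<in>C. \<Sum>b\<in>B. \<Sum>d\<in>D. f a b c d)"
    by (rule sum.cong[OF refl], rule sum.swap)
  also have "\<dots> = (\<Sum>a\<in>A. \<Sum>c\<in>C. \<Sum>d\<in>D. \<Sum>b\<in>B. f a b c d)"
    by (rule sum.cong[OF refl], rule sum.cong[OF refl], rule sum.swap)
  also have "\<dots> = (\<Sum>c\<in>C. \<Sum>a\<in>A. \<Sum>d\<in>D. \<Sum>b\<in>B. f a b c d)"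
    by (rule sum.swap)
  also have "\<dots> = (\<Sum>c\<in>C. \<Sum>d\<in>D. \<Sum>a\<in>A. \<Sum>b\<in>B. f a b c d)"
    by (rule sum.cong[OF refl], rule sum.swap)
  finally show ?thesis .
qed

lemma matrix_inv_mult_left: "invertible A \<Longrightarrow> matrix_inv A ** A = mat 1"
  unfolding invertible_def matrix_inv_def by (rule someI2_ex) auto

locale second_order_observation = prob_space +
  fixes Y :: "'a \<Rightarrow> real^'m" and ybar :: "real^'m" and T :: "real^'m^'m"
  assumes square_integrable_Y: "\<And>m. square_integrable (\<lambda>\<omega>. Y \<omega> $ m)"
    and expectation_Y: "\<And>m. expectation (\<lambda>\<omega>. Y \<omega> $ m) = ybar $ m"
    and expectation_Y_mult: "\<And>m k. expectation (\<lambda>\<omega>. Y \<omega> $ m * Y \<omega> $ k) = T $ m $ k + ybar $ m * ybar $ k"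
    and invertible_T: "invertible T"
begin

lemma T_symmetric: "T $ m $ k = T $ k $ m"
  using expectation_Y_mult[of m k] expectation_Y_mult[of k m] by (simp add: mult.commute)

lemma matrix_inv_T_mult: "(\<Sum>l\<in>UNIV. matrix_inv T $ m $ l * T $ l $ k) = (if m = k then 1 else 0)"
  using arg_cong[OF matrix_inv_mult_left[OF invertible_T], of "\<lambda>C. C $ m $ k"]
  by (simp add: matrix_matrix_mult_def mat_def)

definition affine_estimator :: "real \<Rightarrow> ('m \<Rightarrow> real) \<Rightarrow> 'a \<Rightarrow> real" where
  "affine_estimator c w = (\<lambda>\<omega>. c + (\<Sum>l\<in>UNIV. w l * Y \<omega> $ l))"

lemma square_integrable_affine_estimator: "square_integrable (affine_estimator c w)"
  unfolding affine_estimator_def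
  by (intro square_integrable_add square_integrable_sum square_integrable_cmult square_integrable_Y
      square_integrable_const)

lemma affine_estimator_diff:
  "affine_estimator c w \<omega> - affine_estimator c' w' \<omega> = affine_estimator (c - c') (\<lambda>l. w l - w' l) \<omega>"
  by (simp add: affine_estimator_def left_diff_distrib sum_subtractf)

lemma expectation_mult_affine_estimator:
  assumes "square_integrable G"
  shows "expectation (\<lambda>\<omega>. G \<omega> * affine_estimator c w \<omega>)
           = c * expectation G + (\<Sum>l\<in>UNIV. w l * expectation (\<lambda>\<omega>. G \<omega> * Y \<omega> $ l))"
  unfolding affine_estimator_def using assms square_integrable_Y by (rule expectation_mult_lincomb)

lemma expectation_affine_estimator:
  "expectation (affine_estimator c w) = c + (\<Sum>l\<in>UNIV. w l * ybar $ l)"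
  using expectation_mult_affine_estimator[of "\<lambda>_. 1" c w] by (simp add: expectation_Y prob_space)

lemma expectation_affine_estimator_mult_Y:
  "expectation (\<lambda>\<omega>. affine_estimator c w \<omega> * Y \<omega> $ k)
     = expectation (affine_estimator c w) * ybar $ k + (\<Sum>l\<in>UNIV. w l * T $ l $ k)"
proof -
  have "expectation (\<lambda>\<omega>. affine_estimator c w \<omega> * Y \<omega> $ k)
      = c * ybar $ k + (\<Sum>l\<in>UNIV. w l * (T $ l $ k + ybar $ k * ybar $ l))"
    using expectation_mult_affine_estimator[OF square_integrable_Y, of k c w]
    by (simp add: mult.commute expectation_Y expectation_Y_mult T_symmetric[of k])
  also have "\<dots> = (c + (\<Sum>l\<in>UNIV. w l * ybar $ l)) * ybar $ k + (\<Sum>l\<in>UNIV. w l * T $ l $ k)"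
    by (simp add: ring_distribs sum.distrib sum_distrib_left sum_distrib_right mult_ac)
  finally show ?thesis
    by (simp add: expectation_affine_estimator)
qed

definition lmmse :: "real \<Rightarrow> ('m \<Rightarrow> real) \<Rightarrow> 'a \<Rightarrow> real" where
  "lmmse f0 v = (\<lambda>\<omega>. f0 + (\<Sum>m\<in>UNIV. v m * (matrix_inv T *v (Y \<omega> - ybar)) $ m))"

lemma lmmse_eq_affine_estimator:
  "lmmse f0 v = affine_estimator (f0 - (\<Sum>m\<in>UNIV. v m * (matrix_inv T *v ybar) $ m))
                                 (\<lambda>l. \<Sum>m\<in>UNIV. v m * matrix_inv T $ m $ l)"
proof -
  have "(\<Sum>m\<in>UNIV. v m * (matrix_inv T *v Y \<omega>) $ m) = (\<Sum>l\<in>UNIV. (\<Sum>m\<in>UNIV. v m * matrix_inv T $ m $ l) * Y \<omega> $ l)"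
    for \<omega>
    by (simp add: matrix_vector_mult_def sum_mult_sum_swap)
  then show ?thesis
    by (simp add: fun_eq_iff lmmse_def affine_estimator_def matrix_vector_mult_diff_distrib
        right_diff_distrib sum_subtractf)
qed

lemma square_integrable_lmmse: "square_integrable (lmmse f0 v)"
  unfolding lmmse_eq_affine_estimator by (rule square_integrable_affine_estimator)

lemma expectation_lmmse: "expectation (lmmse f0 v) = f0"
proof -
  have "(\<Sum>l\<in>UNIV. (\<Sum>m\<in>UNIV. v m * matrix_inv T $ m $ l) * ybar $ l)
      = (\<Sum>m\<in>UNIV. v m * (matrix_inv T *v ybar) $ m)"
    by (simp add: matrix_vector_mult_def sum_mult_sum_swap)
  then show ?thesis
    unfolding lmmse_eq_affine_estimator expectation_affine_estimator by simp
qed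

lemma expectation_lmmse_mult_Y: "expectation (\<lambda>\<omega>. lmmse f0 v \<omega> * Y \<omega> $ k) = f0 * ybar $ k + v k"
proof -
  have "(\<Sum>l\<in>UNIV. (\<Sum>m\<in>UNIV. v m * matrix_inv T $ m $ l) * T $ l $ k)
      = (\<Sum>m\<in>UNIV. v m * (\<Sum>l\<in>UNIV. matrix_inv T $ m $ l * T $ l $ k))"
    by (rule sum_mult_sum_swap)
  also have "\<dots> = v k"
    by (simp add: matrix_inv_T_mult if_distrib cong: if_cong)
  finally show ?thesis
    using expectation_affine_estimator_mult_Y expectation_lmmse
    unfolding lmmse_eq_affine_estimator by simp
qed

definition target_moments :: "('a \<Rightarrow> real) \<Rightarrow> real \<Rightarrow> ('m \<Rightarrow> real) \<Rightarrow> bool" where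
  "target_moments F f0 v \<longleftrightarrow> square_integrable F \<and> expectation F = f0
     \<and> (\<forall>l. expectation (\<lambda>\<omega>. F \<omega> * Y \<omega> $ l) = f0 * ybar $ l + v l)"

lemma lmmse_error_orthogonal:
  assumes "target_moments F f0 v"
  shows "expectation (\<lambda>\<omega>. (lmmse f0 v \<omega> - F \<omega>) * affine_estimator c w \<omega>) = 0"
proof -
  have F: "square_integrable F" "expectation F = f0"
      "\<And>l. expectation (\<lambda>\<omega>. F \<omega> * Y \<omega> $ l) = f0 * ybar $ l + v l"
    using assms by (auto simp: target_moments_def)
  have "expectation (\<lambda>\<omega>. lmmse f0 v \<omega> - F \<omega>) = 0"
    using F square_integrable_lmmse
    by (simp add: square_integrable_imp_integrable expectation_lmmse)
  moreover have "expectation (\<lambda>\<omega>. (lmmse f0 v \<omega> - F \<omega>) * Y \<omega> $ l) = 0" for l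
    using F integrable_mult_square_integrable[OF square_integrable_lmmse square_integrable_Y]
      integrable_mult_square_integrable[OF F(1) square_integrable_Y]
    by (simp add: left_diff_distrib expectation_lmmse_mult_Y)
  ultimately show ?thesis
    using F(1) square_integrable_lmmse
    by (simp add: expectation_mult_affine_estimator square_integrable_diff)
qed

lemma lmmse_error_pythagoras:
  assumes "target_moments F f0 v"
  shows "expectation (\<lambda>\<omega>. (affine_estimator c w \<omega> - F \<omega>)\<^sup>2)
       = expectation (\<lambda>\<omega>. (affine_estimator c w \<omega> - lmmse f0 v \<omega>)\<^sup>2)
         + expectation (\<lambda>\<omega>. (lmmse f0 v \<omega> - F \<omega>)\<^sup>2)"
proof -
  define L where "L = lmmse f0 v"
  obtain c' w' where L_affine: "L = affine_estimator c' w'"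
    unfolding L_def lmmse_eq_affine_estimator by blast
  define d where "d \<omega> = affine_estimator c w \<omega> - L \<omega>" for \<omega>
  have d_affine: "d = affine_estimator (c - c') (\<lambda>l. w l - w' l)"
    by (simp add: fun_eq_iff d_def L_affine affine_estimator_diff)
  have sq: "square_integrable d" "square_integrable (\<lambda>\<omega>. L \<omega> - F \<omega>)"
    using assms square_integrable_lmmse
    by (auto simp: d_affine L_def target_moments_def intro: square_integrable_affine_estimator)
  have "(\<lambda>\<omega>. (affine_estimator c w \<omega> - F \<omega>)\<^sup>2)
      = (\<lambda>\<omega>. (d \<omega>)\<^sup>2 + (L \<omega> - F \<omega>)\<^sup>2 + 2 * ((L \<omega> - F \<omega>) * d \<omega>))"
    by (simp add: fun_eq_iff d_def power2_eq_square algebra_simps)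
  moreover have "expectation (\<lambda>\<omega>. (L \<omega> - F \<omega>) * d \<omega>) = 0"
    unfolding d_affine L_def by (rule lmmse_error_orthogonal[OF assms])
  ultimately show ?thesis
    using sq integrable_mult_square_integrable[OF sq(2) sq(1)]
    by (simp add: square_integrable_def d_def L_def)
qed

lemma expectation_target_mult_lmmse:
  assumes "target_moments F f0 v"
  shows "expectation (\<lambda>\<omega>. F \<omega> * lmmse f0 v \<omega>)
       = f0\<^sup>2 + (\<Sum>m\<in>UNIV. \<Sum>l\<in>UNIV. matrix_inv T $ m $ l * v m * v l)"
proof -
  define c' where "c' = f0 - (\<Sum>m\<in>UNIV. v m * (matrix_inv T *v ybar) $ m)"
  define w' where "w' l = (\<Sum>m\<in>UNIV. v m * matrix_inv T $ m $ l)" for l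
  have lmmse_affine: "lmmse f0 v = affine_estimator c' w'"
    unfolding c'_def w'_def by (rule lmmse_eq_affine_estimator)
  have mean: "c' + (\<Sum>l\<in>UNIV. w' l * ybar $ l) = f0"
    using expectation_lmmse[of f0 v] by (simp add: lmmse_affine expectation_affine_estimator)
  have quadratic: "(\<Sum>l\<in>UNIV. w' l * v l) = (\<Sum>m\<in>UNIV. \<Sum>l\<in>UNIV. matrix_inv T $ m $ l * v m * v l)"
    unfolding w'_def sum_mult_sum_swap by (simp add: sum_distrib_left mult_ac)
  have "expectation (\<lambda>\<omega>. F \<omega> * lmmse f0 v \<omega>) = c' * f0 + (\<Sum>l\<in>UNIV. w' l * (f0 * ybar $ l + v l))"
    using assms unfolding lmmse_affine target_moments_def by (simp add: expectation_mult_affine_estimator)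
  also have "\<dots> = f0 * (c' + (\<Sum>l\<in>UNIV. w' l * ybar $ l)) + (\<Sum>l\<in>UNIV. w' l * v l)"
    by (simp add: ring_distribs sum.distrib sum_distrib_left mult_ac)
  finally show ?thesis
    unfolding mean quadratic by (simp add: power2_eq_square)
qed

lemma lmmse_error:
  assumes "target_moments F f0 v"
  shows "expectation (\<lambda>\<omega>. (lmmse f0 v \<omega> - F \<omega>)\<^sup>2)
       = expectation (\<lambda>\<omega>. (F \<omega> - f0)\<^sup>2) - (\<Sum>m\<in>UNIV. \<Sum>l\<in>UNIV. matrix_inv T $ m $ l * v m * v l)"
proof -
  have F: "square_integrable F" "expectation F = f0"
    using assms by (simp_all add: target_moments_def)
  obtain c w where lmmse_affine: "lmmse f0 v = affine_estimator c w"
    unfolding lmmse_eq_affine_estimator by blast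
  have "(\<lambda>\<omega>. (lmmse f0 v \<omega> - F \<omega>)\<^sup>2)
      = (\<lambda>\<omega>. (lmmse f0 v \<omega> - F \<omega>) * lmmse f0 v \<omega> + (F \<omega>)\<^sup>2 - F \<omega> * lmmse f0 v \<omega>)"
    by (simp add: fun_eq_iff power2_eq_square algebra_simps)
  moreover have "expectation (\<lambda>\<omega>. (lmmse f0 v \<omega> - F \<omega>) * lmmse f0 v \<omega>) = 0"
    using lmmse_error_orthogonal[OF assms, of c w] by (simp add: lmmse_affine)
  moreover have "expectation (\<lambda>\<omega>. (F \<omega> - f0)\<^sup>2) = expectation (\<lambda>\<omega>. (F \<omega>)\<^sup>2) - f0\<^sup>2"
    using variance_eq[of F] F by (simp add: square_integrable_def square_integrable_imp_integrable)
  ultimately show ?thesis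
    using F(1) square_integrable_lmmse expectation_target_mult_lmmse[OF assms]
      integrable_mult_square_integrable[OF square_integrable_diff[OF square_integrable_lmmse F(1)] square_integrable_lmmse]
      integrable_mult_square_integrable[OF F(1) square_integrable_lmmse]
    by (simp add: square_integrable_def)
qed

definition lmmse_matrix :: "real^'l^'k \<Rightarrow> ('m \<Rightarrow> real^'l^'k) \<Rightarrow> 'a \<Rightarrow> real^'l^'k" where
  "lmmse_matrix F0 V = (\<lambda>\<omega>. F0 + (\<Sum>m\<in>UNIV. (matrix_inv T *v (Y \<omega> - ybar)) $ m *\<^sub>R V m))"

lemma lmmse_matrix_component: "lmmse_matrix F0 V \<omega> $ i $ j = lmmse (F0 $ i $ j) (\<lambda>m. V m $ i $ j) \<omega>"
  by (simp add: lmmse_matrix_def lmmse_def mult.commute)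

definition affine_matrix_estimator :: "real^'l^'k \<Rightarrow> ('m \<Rightarrow> real^'l^'k) \<Rightarrow> 'a \<Rightarrow> real^'l^'k" where
  "affine_matrix_estimator W0 W = (\<lambda>\<omega>. W0 + (\<Sum>m\<in>UNIV. Y \<omega> $ m *\<^sub>R W m))"

lemma affine_matrix_estimator_component:
  "affine_matrix_estimator W0 W \<omega> $ i $ j = affine_estimator (W0 $ i $ j) (\<lambda>m. W m $ i $ j) \<omega>"
  by (simp add: affine_matrix_estimator_def affine_estimator_def mult.commute)

lemma lmmse_matrix_affine: "\<exists>W0 W. lmmse_matrix F0 V = affine_matrix_estimator W0 W"
proof (intro exI)
  show "lmmse_matrix F0 V
      = affine_matrix_estimator (F0 - (\<Sum>m\<in>UNIV. (matrix_inv T *v ybar) $ m *\<^sub>R V m))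
                                (\<lambda>l. \<Sum>m\<in>UNIV. matrix_inv T $ m $ l *\<^sub>R V m)"
    unfolding fun_eq_iff vec_eq_iff affine_matrix_estimator_component lmmse_matrix_component
      lmmse_eq_affine_estimator
    by (simp add: mult.commute)
qed

context
  fixes F :: "'a \<Rightarrow> real^'l^'k" and F0 :: "real^'l^'k" and V :: "'m \<Rightarrow> real^'l^'k"
  assumes target: "\<And>i j. target_moments (\<lambda>\<omega>. F \<omega> $ i $ j) (F0 $ i $ j) (\<lambda>m. V m $ i $ j)"
begin

lemma square_integrable_target: "square_integrable (\<lambda>\<omega>. F \<omega> $ i $ j)"
  using target by (simp add: target_moments_def)

lemma mse_affine_matrix_decomposition:
  "expectation (\<lambda>\<omega>. frob_sq (affine_matrix_estimator W0 W \<omega> - F \<omega>))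
     = expectation (\<lambda>\<omega>. frob_sq (affine_matrix_estimator W0 W \<omega> - lmmse_matrix F0 V \<omega>))
       + expectation (\<lambda>\<omega>. frob_sq (lmmse_matrix F0 V \<omega> - F \<omega>))"
  using square_integrable_target square_integrable_lmmse square_integrable_affine_estimator
  by (simp add: expectation_frob_sq square_integrable_diff affine_matrix_estimator_component
      lmmse_matrix_component lmmse_error_pythagoras[OF target] sum.distrib)

lemma mse_lmmse_matrix_le:
  "expectation (\<lambda>\<omega>. frob_sq (lmmse_matrix F0 V \<omega> - F \<omega>))
     \<le> expectation (\<lambda>\<omega>. frob_sq (affine_matrix_estimator W0 W \<omega> - F \<omega>))"
  unfolding mse_affine_matrix_decomposition
  by (simp add: Bochner_Integration.integral_nonneg frob_sq_nonneg)

lemma mse_eq_lmmse_matrix_imp_AE_eq: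
  assumes "expectation (\<lambda>\<omega>. frob_sq (affine_matrix_estimator W0 W \<omega> - F \<omega>))
         = expectation (\<lambda>\<omega>. frob_sq (lmmse_matrix F0 V \<omega> - F \<omega>))"
  shows "AE \<omega> in M. affine_matrix_estimator W0 W \<omega> = lmmse_matrix F0 V \<omega>"
proof -
  let ?d = "\<lambda>\<omega>. affine_matrix_estimator W0 W \<omega> - lmmse_matrix F0 V \<omega>"
  have "expectation (\<lambda>\<omega>. frob_sq (?d \<omega>)) = 0"
    using assms unfolding mse_affine_matrix_decomposition by simp
  moreover have "integrable M (\<lambda>\<omega>. frob_sq (?d \<omega>))"
    using square_integrable_lmmse square_integrable_affine_estimator
    by (intro integrable_frob_sq) (simp add: affine_matrix_estimator_component lmmse_matrix_component square_integrable_diff)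
  ultimately have "AE \<omega> in M. frob_sq (?d \<omega>) = 0"
    by (simp add: integral_nonneg_eq_0_iff_AE frob_sq_nonneg)
  then show ?thesis
    by (rule AE_mp) (simp add: frob_sq_eq_0_iff)
qed

lemma mse_lmmse_matrix:
  "expectation (\<lambda>\<omega>. frob_sq (lmmse_matrix F0 V \<omega> - F \<omega>))
     = expectation (\<lambda>\<omega>. frob_sq (F \<omega> - F0))
       - (\<Sum>m\<in>UNIV. \<Sum>m'\<in>UNIV. matrix_inv T $ m $ m' * trace (transpose (V m) ** V m'))"
proof -
  have "(\<Sum>m\<in>UNIV. \<Sum>m'\<in>UNIV. matrix_inv T $ m $ m' * trace (transpose (V m) ** V m'))
      = (\<Sum>m\<in>UNIV. \<Sum>m'\<in>UNIV. \<Sum>i\<in>UNIV. \<Sum>j\<in>UNIV. matrix_inv T $ m $ m' * V m $ i $ j * V m' $ i $ j)"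
    by (simp add: trace_transpose_mult sum_distrib_left mult.assoc)
  also have "\<dots> = (\<Sum>i\<in>UNIV. \<Sum>j\<in>UNIV. \<Sum>m\<in>UNIV. \<Sum>m'\<in>UNIV. matrix_inv T $ m $ m' * V m $ i $ j * V m' $ i $ j)"
    by (rule sum_swap_nested)
  finally show ?thesis
    using square_integrable_target square_integrable_lmmse
    by (simp add: expectation_frob_sq square_integrable_diff lmmse_matrix_component
        lmmse_error[OF target] sum_subtractf)
qed

end

end

section \<open>Moments of Gaussian random variables\<close>

lemma (in prob_space) real_gaussian_moments:
  assumes "real_gaussian M Z mu v"
  shows integrable_real_gaussian_power: "integrable M (\<lambda>\<omega>. (Z \<omega> - mu) ^ n)"
    and real_gaussian_moment_even:
      "expectation (\<lambda>\<omega>. (Z \<omega> - mu) ^ (2 * k)) = v ^ k * fact (2 * k) / (2 ^ k * fact k)"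
    and real_gaussian_moment_odd: "expectation (\<lambda>\<omega>. (Z \<omega> - mu) ^ (2 * k + 1)) = 0"
proof -
  have Z [measurable]: "Z \<in> borel_measurable M"
    using assms by (simp add: real_gaussian_def)
  consider "v = 0" "AE \<omega> in M. Z \<omega> = mu" | "v > 0" "distributed M lborel Z (normal_density mu (sqrt v))"
    using assms by (auto simp: real_gaussian_def)
  then have "integrable M (\<lambda>\<omega>. (Z \<omega> - mu) ^ n)
      \<and> expectation (\<lambda>\<omega>. (Z \<omega> - mu) ^ (2 * k)) = v ^ k * fact (2 * k) / (2 ^ k * fact k)
      \<and> expectation (\<lambda>\<omega>. (Z \<omega> - mu) ^ (2 * k + 1)) = 0"
  proof cases
    case 1
    have AE: "AE \<omega> in M. (Z \<omega> - mu) ^ j = (0::real) ^ j" for j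
      using 1(2) by eventually_elim simp
    have "integrable M (\<lambda>\<omega>. (Z \<omega> - mu) ^ j)" for j
      using integrable_cong_AE[OF _ _ AE] by simp
    moreover have moment: "expectation (\<lambda>\<omega>. (Z \<omega> - mu) ^ j) = 0 ^ j" for j
      using integral_cong_AE[OF _ _ AE] by (simp add: prob_space)
    ultimately show ?thesis
      using moment[of "2 * k"] moment[of "2 * k + 1"] 1(1) by (cases k) auto
  next
    case 2
    have sigma: "0 < sqrt v"
      using 2(1) by simp
    have moment: "expectation (\<lambda>\<omega>. (Z \<omega> - mu) ^ j)
        = (\<integral>t. normal_density mu (sqrt v) t * (t - mu) ^ j \<partial>lborel)" for j
      using distributed_integral[OF 2(2), of "\<lambda>t. (t - mu) ^ j"] by simp
    have "integrable M (\<lambda>\<omega>. (Z \<omega> - mu) ^ n)"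
      using distributed_integrable[OF 2(2), of "\<lambda>t. (t - mu) ^ n"] integrable_normal_moment[OF sigma(1)]
      by simp
    moreover have "fact (2 * k) / ((2 / (sqrt v)\<^sup>2) ^ k * fact k) = v ^ k * fact (2 * k) / (2 ^ k * fact k)"
      using 2(1) by (simp add: power_divide field_simps)
    ultimately show ?thesis
      unfolding moment
      using integral_normal_moment_even[OF sigma(1), where k = k and \<mu> = mu]
        integral_normal_moment_odd[OF sigma(1), where k = k and \<mu> = mu]
      by simp
  qed
  then show "integrable M (\<lambda>\<omega>. (Z \<omega> - mu) ^ n)"
    "expectation (\<lambda>\<omega>. (Z \<omega> - mu) ^ (2 * k)) = v ^ k * fact (2 * k) / (2 ^ k * fact k)"
    "expectation (\<lambda>\<omega>. (Z \<omega> - mu) ^ (2 * k + 1)) = 0"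
    by blast+
qed

lemma (in prob_space) real_gaussian_centered_moments:
  assumes "real_gaussian M Z 0 v"
  shows "expectation (\<lambda>\<omega>. Z \<omega> ^ 1) = 0" "expectation (\<lambda>\<omega>. Z \<omega> ^ 2) = v"
    "expectation (\<lambda>\<omega>. Z \<omega> ^ 3) = 0" "expectation (\<lambda>\<omega>. Z \<omega> ^ 4) = 3 * v\<^sup>2"
  using real_gaussian_moment_odd[OF assms, of 0] real_gaussian_moment_even[OF assms, of 1]
    real_gaussian_moment_odd[OF assms, of 1] real_gaussian_moment_even[OF assms, of 2]
  by (simp_all add: numeral_eq_Suc fact_numeral)

lemma indep3_compose:
  fixes f :: "'b::topological_space \<Rightarrow> 'e::topological_space" and g :: "'c::topological_space \<Rightarrow> 'f::topological_space"
    and h :: "'d::topological_space \<Rightarrow> 'g::topological_space"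
  assumes "indep3 M X Y Z"
    and [measurable]: "f \<in> borel_measurable borel" "g \<in> borel_measurable borel" "h \<in> borel_measurable borel"
  shows "indep3 M (\<lambda>\<omega>. f (X \<omega>)) (\<lambda>\<omega>. g (Y \<omega>)) (\<lambda>\<omega>. h (Z \<omega>))"
  unfolding indep3_def
proof (intro ballI)
  fix A :: "'e set" and B :: "'f set" and C :: "'g set"
  assume "A \<in> sets borel" "B \<in> sets borel" "C \<in> sets borel"
  then have "f -` A \<in> sets borel" "g -` B \<in> sets borel" "h -` C \<in> sets borel"
    using assms(2-4) by (blast intro: measurable_sets_borel)+
  from assms(1)[unfolded indep3_def, rule_format, OF this]
  show "measure M {\<omega> \<in> space M. f (X \<omega>) \<in> A \<and> g (Y \<omega>) \<in> B \<and> h (Z \<omega>) \<in> C}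
      = measure M {\<omega> \<in> space M. f (X \<omega>) \<in> A} * measure M {\<omega> \<in> space M. g (Y \<omega>) \<in> B}
        * measure M {\<omega> \<in> space M. h (Z \<omega>) \<in> C}"
    by simp
qed

lemma (in prob_space) indep3_indep_vars:
  fixes X Y Z :: "'a \<Rightarrow> real"
  assumes indep: "indep3 M X Y Z"
    and [measurable]: "X \<in> borel_measurable M" "Y \<in> borel_measurable M" "Z \<in> borel_measurable M"
  shows "indep_vars (\<lambda>_. borel) ((!) [X, Y, Z]) {0, 1, 2}"
proof -
  have measurable: "random_variable borel ([X, Y, Z] ! i)" if "i \<in> {0, 1, 2}" for i
    using that by auto
  let ?F = "\<lambda>i. {([X, Y, Z] ! i) -` A \<inter> space M | A. A \<in> sets borel}"
  have "indep_sets ?F {0, 1, 2}"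
  proof (subst indep_sets_finite)
    show "?F i \<subseteq> events" if "i \<in> {0, 1, 2}" for i
      using measurable_sets[OF measurable[OF that]] by blast
    show "space M \<in> ?F i" for i
      by (auto intro!: exI[of _ UNIV])
    show "\<forall>S\<in>Pi {0, 1, 2} ?F. prob (\<Inter>j\<in>{0, 1, 2}. S j) = (\<Prod>j\<in>{0, 1, 2}. prob (S j))"
    proof
      fix S assume S: "S \<in> Pi {0, 1, 2} ?F"
      obtain A where A: "A \<in> sets borel" "S 0 = X -` A \<inter> space M"
        using S by auto
      obtain B where B: "B \<in> sets borel" "S 1 = Y -` B \<inter> space M"
        using S by auto
      obtain C where C: "C \<in> sets borel" "S 2 = Z -` C \<inter> space M"
        using S by auto
      have "(\<Inter>j\<in>{0, 1, 2}. S j) = {\<omega> \<in> space M. X \<omega> \<in> A \<and> Y \<omega> \<in> B \<and> Z \<omega> \<in> C}"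
        using A(2) B(2) C(2) by (auto simp: numeral_2_eq_2)
      moreover have "S 0 = {\<omega> \<in> space M. X \<omega> \<in> A}" "S 1 = {\<omega> \<in> space M. Y \<omega> \<in> B}"
          "S 2 = {\<omega> \<in> space M. Z \<omega> \<in> C}"
        using A(2) B(2) C(2) by auto
      ultimately show "prob (\<Inter>j\<in>{0, 1, 2}. S j) = (\<Prod>j\<in>{0, 1, 2}. prob (S j))"
        using indep[unfolded indep3_def, rule_format, OF A(1) B(1) C(1)] by (simp add: mult.assoc)
    qed
  qed auto
  then show ?thesis
    unfolding indep_vars_def2 using measurable by simp
qed

lemma (in prob_space) indep3_expectation_mult:
  fixes X Y Z :: "'a \<Rightarrow> real"
  assumes "indep3 M X Y Z"
    and "X \<in> borel_measurable M" "Y \<in> borel_measurable M" "Z \<in> borel_measurable M"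
    and "integrable M X" "integrable M Y" "integrable M Z"
  shows "integrable M (\<lambda>\<omega>. X \<omega> * Y \<omega> * Z \<omega>)"
    and "expectation (\<lambda>\<omega>. X \<omega> * Y \<omega> * Z \<omega>) = expectation X * expectation Y * expectation Z"
proof -
  have "integrable M ([X, Y, Z] ! i)" if "i \<in> {0, 1, 2}" for i
    using that assms(5-7) by auto
  note product = indep_vars_integrable[OF _ indep3_indep_vars[OF assms(1-4)] this]
    indep_vars_lebesgue_integral[OF _ indep3_indep_vars[OF assms(1-4)] this]
  show "integrable M (\<lambda>\<omega>. X \<omega> * Y \<omega> * Z \<omega>)"
    and "expectation (\<lambda>\<omega>. X \<omega> * Y \<omega> * Z \<omega>) = expectation X * expectation Y * expectation Z"
    using product by (simp_all add: mult.assoc)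
qed

lemma (in prob_space) indep3_expectation_sum_power_mult:
  fixes U W Z :: "'a \<Rightarrow> real"
  assumes indep: "indep3 M U W Z"
    and [measurable]: "U \<in> borel_measurable M" "W \<in> borel_measurable M" "Z \<in> borel_measurable M"
    and U: "\<And>k. integrable M (\<lambda>\<omega>. U \<omega> ^ k)" and W: "\<And>k. integrable M (\<lambda>\<omega>. W \<omega> ^ k)"
    and Z: "integrable M Z"
  shows "integrable M (\<lambda>\<omega>. (U \<omega> + W \<omega>) ^ n * Z \<omega>)"
    and "expectation (\<lambda>\<omega>. (U \<omega> + W \<omega>) ^ n * Z \<omega>)
           = (\<Sum>k\<le>n. of_nat (n choose k) * expectation (\<lambda>\<omega>. U \<omega> ^ k) * expectation (\<lambda>\<omega>. W \<omega> ^ (n - k)))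
             * expectation Z"
proof -
  have summand: "integrable M (\<lambda>\<omega>. U \<omega> ^ k * W \<omega> ^ j * Z \<omega>)"
      "expectation (\<lambda>\<omega>. U \<omega> ^ k * W \<omega> ^ j * Z \<omega>)
         = expectation (\<lambda>\<omega>. U \<omega> ^ k) * expectation (\<lambda>\<omega>. W \<omega> ^ j) * expectation Z" for k j
  proof -
    have "indep3 M (\<lambda>\<omega>. U \<omega> ^ k) (\<lambda>\<omega>. W \<omega> ^ j) (\<lambda>\<omega>. Z \<omega>)"
      by (rule indep3_compose[OF indep]) measurable
    then show "integrable M (\<lambda>\<omega>. U \<omega> ^ k * W \<omega> ^ j * Z \<omega>)"
      "expectation (\<lambda>\<omega>. U \<omega> ^ k * W \<omega> ^ j * Z \<omega>)
         = expectation (\<lambda>\<omega>. U \<omega> ^ k) * expectation (\<lambda>\<omega>. W \<omega> ^ j) * expectation Z"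
      by (rule indep3_expectation_mult[OF _ _ _ _ U W Z]; measurable)+
  qed
  have expand: "(U \<omega> + W \<omega>) ^ n * Z \<omega>
      = (\<Sum>k\<le>n. of_nat (n choose k) * (U \<omega> ^ k * W \<omega> ^ (n - k) * Z \<omega>))" for \<omega>
    by (simp add: binomial_ring sum_distrib_right mult.assoc)
  show "integrable M (\<lambda>\<omega>. (U \<omega> + W \<omega>) ^ n * Z \<omega>)"
    unfolding expand using summand(1) by simp
  show "expectation (\<lambda>\<omega>. (U \<omega> + W \<omega>) ^ n * Z \<omega>)
      = (\<Sum>k\<le>n. of_nat (n choose k) * expectation (\<lambda>\<omega>. U \<omega> ^ k) * expectation (\<lambda>\<omega>. W \<omega> ^ (n - k)))
        * expectation Z"
    unfolding expand
    by (simp add: Bochner_Integration.integral_sum summand sum_distrib_right) (simp add: mult.assoc)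
qed

lemma (in prob_space) indep3_gaussian_sum_moments:
  fixes U W Z :: "'a \<Rightarrow> real"
  assumes indep: "indep3 M U W Z"
    and U: "real_gaussian M U 0 a" and W: "real_gaussian M W 0 b"
    and [measurable]: "Z \<in> borel_measurable M" and Z: "integrable M Z"
  shows "integrable M (\<lambda>\<omega>. (U \<omega> + W \<omega>) ^ n * Z \<omega>)"
    and "expectation (\<lambda>\<omega>. (U \<omega> + W \<omega>)\<^sup>2 * Z \<omega>) = (a + b) * expectation Z"
    and "expectation (\<lambda>\<omega>. (U \<omega> + W \<omega>) ^ 4 * Z \<omega>) = 3 * (a + b)\<^sup>2 * expectation Z"
proof -
  have [measurable]: "U \<in> borel_measurable M" "W \<in> borel_measurable M"
    using U W by (simp_all add: real_gaussian_def)
  note sum_moments = indep3_expectation_sum_power_mult[OF indep \<open>U \<in> borel_measurable M\<close>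
      \<open>W \<in> borel_measurable M\<close> \<open>Z \<in> borel_measurable M\<close>
      integrable_real_gaussian_power[OF U, simplified] integrable_real_gaussian_power[OF W, simplified] Z]
  have binomial2: "(\<Sum>k\<le>2. of_nat (2 choose k) * f k * g (2 - k)) = f 0 * g 2 + 2 * f 1 * g 1 + f 2 * g 0"
    and binomial4: "(\<Sum>k\<le>4. of_nat (4 choose k) * f k * g (4 - k))
      = f 0 * g 4 + 4 * f 1 * g 3 + 6 * f 2 * g 2 + 4 * f 3 * g 1 + f 4 * g 0"
    for f g :: "nat \<Rightarrow> real"
    by (simp_all add: eval_nat_numeral atMost_Suc)
  show "integrable M (\<lambda>\<omega>. (U \<omega> + W \<omega>) ^ n * Z \<omega>)"
    by (rule sum_moments)
  show "expectation (\<lambda>\<omega>. (U \<omega> + W \<omega>)\<^sup>2 * Z \<omega>) = (a + b) * expectation Z"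
    unfolding sum_moments binomial2[of "\<lambda>k. expectation (\<lambda>\<omega>. U \<omega> ^ k)" "\<lambda>k. expectation (\<lambda>\<omega>. W \<omega> ^ k)"]
    using real_gaussian_centered_moments[OF U] real_gaussian_centered_moments[OF W]
    by (simp add: prob_space algebra_simps)
  show "expectation (\<lambda>\<omega>. (U \<omega> + W \<omega>) ^ 4 * Z \<omega>) = 3 * (a + b)\<^sup>2 * expectation Z"
    unfolding sum_moments binomial4[of "\<lambda>k. expectation (\<lambda>\<omega>. U \<omega> ^ k)" "\<lambda>k. expectation (\<lambda>\<omega>. W \<omega> ^ k)"]
    using real_gaussian_centered_moments[OF U] real_gaussian_centered_moments[OF W]
    by (simp add: prob_space power2_eq_square algebra_simps)
qed

lemma sym_biadditive_add_diff:
  fixes Q :: "'p::ab_group_add \<Rightarrow> 'p \<Rightarrow> 'b::comm_ring_1"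
  assumes Q_add: "\<And>p r s. Q (p + r) s = Q p s + Q r s" and Q_sym: "\<And>p r. Q p r = Q r p"
  shows "Q (p + r) (p + r) = Q p p + 2 * Q p r + Q r r"
    and "Q (p - r) (p - r) = Q p p - 2 * Q p r + Q r r"
proof -
  have Q_diff: "Q (p - r) s = Q p s - Q r s" for p r s
    using Q_add[of "p - r" r s] by (simp add: algebra_simps)
  have Q_add': "Q s (p + r) = Q s p + Q s r" and Q_diff': "Q s (p - r) = Q s p - Q s r" for p r s
    by (simp_all add: Q_sym[of s] Q_add Q_diff)
  show "Q (p + r) (p + r) = Q p p + 2 * Q p r + Q r r"
    using Q_sym[of r p] by (simp add: Q_add Q_add' algebra_simps)
  show "Q (p - r) (p - r) = Q p p - 2 * Q p r + Q r r"
    using Q_sym[of r p] by (simp add: Q_diff Q_diff' algebra_simps)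
qed

lemma (in prob_space) expectation_mult_polarization:
  fixes S :: "'p::ab_group_add \<Rightarrow> 'a \<Rightarrow> real" and Q :: "'p \<Rightarrow> 'p \<Rightarrow> real"
  assumes S_add: "\<And>p r \<omega>. S (p + r) \<omega> = S p \<omega> + S r \<omega>"
    and Q_add: "\<And>p r s. Q (p + r) s = Q p s + Q r s" and Q_sym: "\<And>p r. Q p r = Q r p"
    and integrable: "\<And>q. integrable M (\<lambda>\<omega>. (S q \<omega>)\<^sup>2 * G \<omega>)"
    and moment: "\<And>q. expectation (\<lambda>\<omega>. (S q \<omega>)\<^sup>2 * G \<omega>) = Q q q"
  shows "expectation (\<lambda>\<omega>. S p \<omega> * S r \<omega> * G \<omega>) = Q p r"
proof -
  have S_diff: "S (p - r) \<omega> = S p \<omega> - S r \<omega>" for p r \<omega>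
    using S_add[of "p - r" r \<omega>] by simp
  have "(\<lambda>\<omega>. S p \<omega> * S r \<omega> * G \<omega>) = (\<lambda>\<omega>. ((S (p + r) \<omega>)\<^sup>2 * G \<omega> - (S (p - r) \<omega>)\<^sup>2 * G \<omega>) / 4)"
    by (simp add: fun_eq_iff S_add S_diff power2_eq_square algebra_simps)
  then show ?thesis
    using integrable sym_biadditive_add_diff[of Q, OF Q_add Q_sym] by (simp add: moment)
qed

text \<open>
  Only the fourth moments of a centred Gaussian family with covariance Q are assumed; the mixed
  fourth moments follow by polarization.
\<close>

locale gaussian_moment_family = prob_space +
  fixes S :: "'p::ab_group_add \<Rightarrow> 'a \<Rightarrow> real" and Q :: "'p \<Rightarrow> 'p \<Rightarrow> real"
  assumes S_add: "\<And>p r \<omega>. S (p + r) \<omega> = S p \<omega> + S r \<omega>"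
    and Q_add: "\<And>p r s. Q (p + r) s = Q p s + Q r s" and Q_sym: "\<And>p r. Q p r = Q r p"
    and S_measurable: "\<And>q. S q \<in> borel_measurable M"
    and integrable_S_power4: "\<And>q. integrable M (\<lambda>\<omega>. (S q \<omega>) ^ 4)"
    and expectation_S_power4: "\<And>q. expectation (\<lambda>\<omega>. (S q \<omega>) ^ 4) = 3 * (Q q q)\<^sup>2"
begin

lemma integrable_S_sq_mult_sq: "integrable M (\<lambda>\<omega>. (S p \<omega>)\<^sup>2 * (S r \<omega>)\<^sup>2)"
  by (intro integrable_mult_square_integrable square_integrable_power2 S_measurable integrable_S_power4)

lemma expectation_S_sq_mult_sq:
  "expectation (\<lambda>\<omega>. (S p \<omega>)\<^sup>2 * (S r \<omega>)\<^sup>2) = Q p p * Q r r + 2 * (Q p r)\<^sup>2"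
proof -
  have S_diff: "S (p - r) \<omega> = S p \<omega> - S r \<omega>" for \<omega>
    using S_add[of "p - r" r \<omega>] by simp
  have "(\<lambda>\<omega>. (S (p + r) \<omega>) ^ 4 + (S (p - r) \<omega>) ^ 4)
      = (\<lambda>\<omega>. 2 * (S p \<omega>) ^ 4 + 12 * ((S p \<omega>)\<^sup>2 * (S r \<omega>)\<^sup>2) + 2 * (S r \<omega>) ^ 4)"
    by (simp add: fun_eq_iff S_add S_diff power2_eq_square power4_eq_xxxx algebra_simps)
  then have "expectation (\<lambda>\<omega>. (S (p + r) \<omega>) ^ 4 + (S (p - r) \<omega>) ^ 4)
      = expectation (\<lambda>\<omega>. 2 * (S p \<omega>) ^ 4 + 12 * ((S p \<omega>)\<^sup>2 * (S r \<omega>)\<^sup>2) + 2 * (S r \<omega>) ^ 4)"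
    by (rule arg_cong)
  then have "3 * (Q (p + r) (p + r))\<^sup>2 + 3 * (Q (p - r) (p - r))\<^sup>2
      = 6 * (Q p p)\<^sup>2 + 12 * expectation (\<lambda>\<omega>. (S p \<omega>)\<^sup>2 * (S r \<omega>)\<^sup>2) + 6 * (Q r r)\<^sup>2"
    using integrable_S_power4 integrable_S_sq_mult_sq by (simp add: expectation_S_power4)
  then show ?thesis
    unfolding sym_biadditive_add_diff[of Q, OF Q_add Q_sym] by (simp add: power2_eq_square algebra_simps)
qed

lemma expectation_S_mult_mult_sq:
  "expectation (\<lambda>\<omega>. S p \<omega> * S r \<omega> * (S c \<omega>)\<^sup>2) = Q p r * Q c c + 2 * (Q p c * Q r c)"
proof (rule expectation_mult_polarization[OF S_add _ _ integrable_S_sq_mult_sq,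
      where Q = "\<lambda>p r. Q p r * Q c c + 2 * (Q p c * Q r c)"])
  show "expectation (\<lambda>\<omega>. (S q \<omega>)\<^sup>2 * (S c \<omega>)\<^sup>2) = Q q q * Q c c + 2 * (Q q c * Q q c)" for q
    unfolding expectation_S_sq_mult_sq by (simp add: power2_eq_square)
  show "Q (p + r) s * Q c c + 2 * (Q (p + r) c * Q s c)
      = Q p s * Q c c + 2 * (Q p c * Q s c) + (Q r s * Q c c + 2 * (Q r c * Q s c))" for p r s
    by (simp add: Q_add algebra_simps)
  show "Q p r * Q c c + 2 * (Q p c * Q r c) = Q r p * Q c c + 2 * (Q r c * Q p c)" for p r
    using Q_sym[of p r] by simp
qed

end

lemma symmetric_matrix_inner_commute:
  fixes C :: "real^'m^'m"
  assumes "transpose C = C"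
  shows "u \<bullet> (C *v w) = w \<bullet> (C *v u)"
proof -
  have "u \<bullet> (C *v w) = (transpose C *v u) \<bullet> w"
    by (simp add: dot_lmul_matrix)
  then show ?thesis
    using assms by (simp add: inner_commute)
qed

lemma (in prob_space) gaussian_vec_moments:
  assumes gauss: "gaussian_vec M X mu C"
  shows square_integrable_gaussian_vec: "square_integrable (\<lambda>\<omega>. X \<omega> $ k)"
    and expectation_gaussian_vec: "expectation (\<lambda>\<omega>. X \<omega> $ k) = mu $ k"
    and expectation_gaussian_vec_mult: "expectation (\<lambda>\<omega>. X \<omega> $ m * X \<omega> $ k) = C $ m $ k + mu $ m * mu $ k"
proof -
  define S where "S v = (\<lambda>\<omega>. v \<bullet> X \<omega> - v \<bullet> mu)" for v
  have v_gauss: "real_gaussian M (\<lambda>\<omega>. v \<bullet> X \<omega>) (v \<bullet> mu) (v \<bullet> (C *v v))" for v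
    using gauss by (simp add: gaussian_vec_def)
  have [measurable]: "X \<in> borel_measurable M"
    using gauss by (simp add: gaussian_vec_def)
  have S_add: "S (p + r) \<omega> = S p \<omega> + S r \<omega>" for p r \<omega>
    by (simp add: S_def inner_add_left)
  have S_integrable: "integrable M (\<lambda>\<omega>. (S v \<omega>) ^ n)" for v n
    unfolding S_def by (rule integrable_real_gaussian_power[OF v_gauss])
  have S_mean: "expectation (S v) = 0" for v
    using real_gaussian_moment_odd[OF v_gauss[of v], of 0] by (simp add: S_def)
  have S_var: "expectation (\<lambda>\<omega>. (S v \<omega>)\<^sup>2) = v \<bullet> (C *v v)" for v
    using real_gaussian_moment_even[OF v_gauss[of v], of 1] by (simp add: S_def)
  have C_symmetric: "transpose C = C"
    using gauss by (simp add: gaussian_vec_def)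
  have S_cov: "expectation (\<lambda>\<omega>. S v \<omega> * S w \<omega>) = v \<bullet> (C *v w)" for v w
  proof -
    have "expectation (\<lambda>\<omega>. S v \<omega> * S w \<omega> * 1) = v \<bullet> (C *v w)"
    proof (rule expectation_mult_polarization[where Q = "\<lambda>v w. v \<bullet> (C *v w)", OF S_add])
      show "(p + r) \<bullet> (C *v s) = p \<bullet> (C *v s) + r \<bullet> (C *v s)" for p r s
        by (simp add: inner_add_left)
      show "p \<bullet> (C *v r) = r \<bullet> (C *v p)" for p r
        using C_symmetric by (rule symmetric_matrix_inner_commute)
    qed (simp_all add: S_integrable S_var)
    then show ?thesis
      by simp
  qed
  have X_component: "X \<omega> $ k = S (axis k 1) \<omega> + mu $ k" for \<omega> k
    by (simp add: S_def inner_axis')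
  have S_square_integrable: "square_integrable (S v)" for v
    using S_integrable[of v 2] by (simp add: square_integrable_def S_def)
  show "square_integrable (\<lambda>\<omega>. X \<omega> $ k)"
    unfolding X_component using S_square_integrable by (intro square_integrable_add) simp_all
  show "expectation (\<lambda>\<omega>. X \<omega> $ k) = mu $ k"
    unfolding X_component
    using square_integrable_imp_integrable[OF S_square_integrable] S_mean by (simp add: prob_space)
  have "(\<lambda>\<omega>. X \<omega> $ m * X \<omega> $ k)
      = (\<lambda>\<omega>. S (axis m 1) \<omega> * S (axis k 1) \<omega> + mu $ k * S (axis m 1) \<omega> + mu $ m * S (axis k 1) \<omega>
             + mu $ m * mu $ k)"
    by (simp add: fun_eq_iff X_component algebra_simps)
  then show "expectation (\<lambda>\<omega>. X \<omega> $ m * X \<omega> $ k) = C $ m $ k + mu $ m * mu $ k"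
    using integrable_mult_square_integrable[OF S_square_integrable S_square_integrable]
      square_integrable_imp_integrable[OF S_square_integrable]
    by (simp add: S_cov S_mean prob_space inner_axis' matrix_vector_mul_component inner_axis)
qed

section \<open>The quadratic observation model\<close>

locale gaussian_observation_model = prob_space +
  fixes \<sigma>x :: real and Cez Cey :: "real^'m^'m" and eybar :: "real^'m"
    and x :: "'a \<Rightarrow> real^'n" and ez ey :: "'a \<Rightarrow> real^'m"
  assumes gaussian_x: "gaussian_vec M x 0 (\<sigma>x\<^sup>2 *\<^sub>R mat 1)"
    and gaussian_ez: "gaussian_vec M ez 0 Cez"
    and gaussian_ey: "gaussian_vec M ey eybar Cey"
    and indep: "indep3 M x ez ey"
begin

lemma measurable_signals [measurable]:
  "x \<in> borel_measurable M" "ez \<in> borel_measurable M" "ey \<in> borel_measurable M"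
  using gaussian_x gaussian_ez gaussian_ey by (simp_all add: gaussian_vec_def)

definition proj :: "(real^'n) \<times> (real^'m) \<Rightarrow> 'a \<Rightarrow> real" where
  "proj p = (\<lambda>\<omega>. fst p \<bullet> x \<omega> + snd p \<bullet> ez \<omega>)"

definition proj_cov :: "(real^'n) \<times> (real^'m) \<Rightarrow> (real^'n) \<times> (real^'m) \<Rightarrow> real" where
  "proj_cov p r = \<sigma>x\<^sup>2 * (fst p \<bullet> fst r) + snd p \<bullet> (Cez *v snd r)"

lemma measurable_proj [measurable]: "proj p \<in> borel_measurable M"
  unfolding proj_def by measurable

lemma proj_add: "proj (p + r) \<omega> = proj p \<omega> + proj r \<omega>"
  by (simp add: proj_def inner_add_left)

lemma proj_cov_add: "proj_cov (p + r) s = proj_cov p s + proj_cov r s"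
  by (simp add: proj_cov_def inner_add_left algebra_simps)

lemma proj_cov_sym: "proj_cov p r = proj_cov r p"
  using gaussian_ez symmetric_matrix_inner_commute[of Cez "snd p" "snd r"]
  by (simp add: proj_cov_def gaussian_vec_def inner_commute)

lemma proj_moments:
  assumes [measurable]: "h \<in> borel_measurable borel" and h: "integrable M (\<lambda>\<omega>. h (ey \<omega>))"
  shows "integrable M (\<lambda>\<omega>. proj p \<omega> ^ n * h (ey \<omega>))"
    and "expectation (\<lambda>\<omega>. (proj p \<omega>)\<^sup>2 * h (ey \<omega>)) = proj_cov p p * expectation (\<lambda>\<omega>. h (ey \<omega>))"
    and "expectation (\<lambda>\<omega>. proj p \<omega> ^ 4 * h (ey \<omega>)) = 3 * (proj_cov p p)\<^sup>2 * expectation (\<lambda>\<omega>. h (ey \<omega>))"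
proof -
  have indep_proj: "indep3 M (\<lambda>\<omega>. fst p \<bullet> x \<omega>) (\<lambda>\<omega>. snd p \<bullet> ez \<omega>) (\<lambda>\<omega>. h (ey \<omega>))"
    by (rule indep3_compose[OF indep]) measurable
  have gaussian_x_proj: "real_gaussian M (\<lambda>\<omega>. fst p \<bullet> x \<omega>) 0 (\<sigma>x\<^sup>2 * (fst p \<bullet> fst p))"
    using gaussian_x by (simp add: gaussian_vec_def flip: scaleR_matrix_vector_assoc)
  have gaussian_ez_proj: "real_gaussian M (\<lambda>\<omega>. snd p \<bullet> ez \<omega>) 0 (snd p \<bullet> (Cez *v snd p))"
    using gaussian_ez by (simp add: gaussian_vec_def)
  have "(\<lambda>\<omega>. h (ey \<omega>)) \<in> borel_measurable M"
    by measurable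
  note moments = indep3_gaussian_sum_moments[OF indep_proj gaussian_x_proj gaussian_ez_proj this h]
  show "integrable M (\<lambda>\<omega>. proj p \<omega> ^ n * h (ey \<omega>))"
    unfolding proj_def by (rule moments)
  show "expectation (\<lambda>\<omega>. (proj p \<omega>)\<^sup>2 * h (ey \<omega>)) = proj_cov p p * expectation (\<lambda>\<omega>. h (ey \<omega>))"
    unfolding proj_def proj_cov_def by (rule moments)
  show "expectation (\<lambda>\<omega>. proj p \<omega> ^ 4 * h (ey \<omega>)) = 3 * (proj_cov p p)\<^sup>2 * expectation (\<lambda>\<omega>. h (ey \<omega>))"
    unfolding proj_def proj_cov_def by (rule moments)
qed

lemma integrable_proj_power: "integrable M (\<lambda>\<omega>. proj p \<omega> ^ n)"
  using proj_moments(1)[where h = "\<lambda>_. 1", OF borel_measurable_const integrable_const] by simp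

lemma expectation_proj_power4: "expectation (\<lambda>\<omega>. proj p \<omega> ^ 4) = 3 * (proj_cov p p)\<^sup>2"
  using proj_moments(3)[where h = "\<lambda>_. 1", OF borel_measurable_const integrable_const]
  by (simp add: prob_space)

lemma square_integrable_proj_sq: "square_integrable (\<lambda>\<omega>. (proj p \<omega>)\<^sup>2)"
  by (intro square_integrable_power2 measurable_proj integrable_proj_power)

lemma square_integrable_ey: "square_integrable (\<lambda>\<omega>. ey \<omega> $ k)"
  by (rule square_integrable_gaussian_vec[OF gaussian_ey])

lemma expectation_proj_sq_mult_ey:
  "expectation (\<lambda>\<omega>. (proj p \<omega>)\<^sup>2 * ey \<omega> $ k) = proj_cov p p * eybar $ k"
  and integrable_proj_sq_mult_ey: "integrable M (\<lambda>\<omega>. (proj p \<omega>)\<^sup>2 * ey \<omega> $ k)"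
proof -
  have "(\<lambda>v. v $ k) \<in> borel_measurable (borel :: (real^'m) measure)"
    by measurable
  moreover have "integrable M (\<lambda>\<omega>. ey \<omega> $ k)"
    by (rule square_integrable_imp_integrable[OF square_integrable_ey])
  ultimately show "expectation (\<lambda>\<omega>. (proj p \<omega>)\<^sup>2 * ey \<omega> $ k) = proj_cov p p * eybar $ k"
    and "integrable M (\<lambda>\<omega>. (proj p \<omega>)\<^sup>2 * ey \<omega> $ k)"
    using proj_moments(1,2)[where h = "\<lambda>v. v $ k"] expectation_gaussian_vec[OF gaussian_ey]
    by simp_all
qed

lemma expectation_proj_mult_ey:
  "expectation (\<lambda>\<omega>. proj p \<omega> * proj r \<omega> * ey \<omega> $ k) = proj_cov p r * eybar $ k"
proof (rule expectation_mult_polarization[where Q = "\<lambda>p r. proj_cov p r * eybar $ k", OF proj_add _ _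
      integrable_proj_sq_mult_ey expectation_proj_sq_mult_ey])
  show "proj_cov (p + r) s * eybar $ k = proj_cov p s * eybar $ k + proj_cov r s * eybar $ k" for p r s
    by (simp add: proj_cov_add distrib_right)
  show "proj_cov p r * eybar $ k = proj_cov r p * eybar $ k" for p r
    by (simp only: proj_cov_sym[of p r])
qed

lemma expectation_proj_sq: "expectation (\<lambda>\<omega>. (proj p \<omega>)\<^sup>2) = proj_cov p p"
  using proj_moments(2)[where h = "\<lambda>_. 1", OF borel_measurable_const integrable_const]
  by (simp add: prob_space)

lemma expectation_proj_mult: "expectation (\<lambda>\<omega>. proj p \<omega> * proj r \<omega>) = proj_cov p r"
proof -
  have "expectation (\<lambda>\<omega>. proj p \<omega> * proj r \<omega> * 1) = proj_cov p r"
    by (rule expectation_mult_polarization[OF proj_add proj_cov_add proj_cov_sym])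
      (simp_all add: integrable_proj_power expectation_proj_sq)
  then show ?thesis
    by simp
qed

sublocale proj: gaussian_moment_family M proj proj_cov
  by unfold_locales
    (rule proj_add proj_cov_add proj_cov_sym measurable_proj integrable_proj_power expectation_proj_power4)+

end

locale quadratic_observation_model = gaussian_observation_model M \<sigma>x Cez Cey eybar x ez ey
  for M :: "'a measure" and \<sigma>x :: real and Cez Cey :: "real^'m^'m" and eybar :: "real^'m"
    and x :: "'a \<Rightarrow> real^'n" and ez ey :: "'a \<Rightarrow> real^'m" +
  fixes A :: "real^'n^'m"
begin

definition Cz :: "real^'m^'m" where
  "Cz = \<sigma>x\<^sup>2 *\<^sub>R (A ** transpose A) + Cez"

definition obs :: "'a \<Rightarrow> real^'m" where
  "obs = (\<lambda>\<omega>. \<chi> m. ((A *v x \<omega> + ez \<omega>) $ m)\<^sup>2 + ey \<omega> $ m)"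

definition obs_mean :: "real^'m" where
  "obs_mean = (\<chi> m. Cz $ m $ m) + eybar"

definition obs_cov :: "real^'m^'m" where
  "obs_cov = (\<chi> m m'. 2 * (Cz $ m $ m' * Cz $ m $ m')) + Cey"

definition cross_cov :: "'m \<Rightarrow> real^'n^'n" where
  "cross_cov m = (2 * \<sigma>x ^ 4) *\<^sub>R outer (A $ m) (A $ m)"

lemma obs_component: "obs \<omega> $ m = (proj (A $ m, axis m 1) \<omega>)\<^sup>2 + ey \<omega> $ m"
  by (simp add: obs_def proj_def matrix_vector_mul_component inner_axis')

lemma x_component: "x \<omega> $ i = proj (axis i 1, 0) \<omega>"
  by (simp add: proj_def inner_axis')

lemma proj_cov_x_x: "proj_cov (axis i 1, 0) (axis j 1, 0) = (\<sigma>x\<^sup>2 *\<^sub>R mat 1) $ i $ j"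
  by (simp add: proj_cov_def inner_axis_axis mat_def)

lemma proj_cov_x_z: "proj_cov (axis i 1, 0) (A $ m, axis m 1) = \<sigma>x\<^sup>2 * A $ m $ i"
  by (simp add: proj_cov_def inner_axis')

lemma proj_cov_z_z: "proj_cov (A $ m, axis m 1) (A $ k, axis k 1) = Cz $ m $ k"
proof -
  have "A $ m \<bullet> A $ k = (A ** transpose A) $ m $ k"
    by (simp add: matrix_matrix_mult_def transpose_def inner_vec_def)
  moreover have "axis m 1 \<bullet> (Cez *v axis k 1) = Cez $ m $ k"
    by (simp add: inner_axis' matrix_vector_mul_component inner_axis)
  ultimately show ?thesis
    by (simp add: proj_cov_def Cz_def)
qed

lemma square_integrable_obs: "square_integrable (\<lambda>\<omega>. obs \<omega> $ m)"
  unfolding obs_component by (intro square_integrable_add square_integrable_proj_sq square_integrable_ey)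

lemma expectation_obs: "expectation (\<lambda>\<omega>. obs \<omega> $ m) = obs_mean $ m"
  unfolding obs_component
  using integrable_proj_power square_integrable_imp_integrable[OF square_integrable_ey]
  by (simp add: expectation_proj_sq expectation_gaussian_vec[OF gaussian_ey] proj_cov_z_z obs_mean_def)

lemma expectation_obs_mult:
  "expectation (\<lambda>\<omega>. obs \<omega> $ m * obs \<omega> $ k) = obs_cov $ m $ k + obs_mean $ m * obs_mean $ k"
proof -
  let ?z = "\<lambda>m. proj (A $ m, axis m 1)"
  have "(\<lambda>\<omega>. obs \<omega> $ m * obs \<omega> $ k)
      = (\<lambda>\<omega>. (?z m \<omega>)\<^sup>2 * (?z k \<omega>)\<^sup>2 + (?z m \<omega>)\<^sup>2 * ey \<omega> $ k + (?z k \<omega>)\<^sup>2 * ey \<omega> $ m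
             + ey \<omega> $ m * ey \<omega> $ k)"
    by (simp add: fun_eq_iff obs_component algebra_simps)
  moreover have "integrable M (\<lambda>\<omega>. (?z m \<omega>)\<^sup>2 * (?z k \<omega>)\<^sup>2)"
    and "integrable M (\<lambda>\<omega>. (?z m \<omega>)\<^sup>2 * ey \<omega> $ k)" "integrable M (\<lambda>\<omega>. (?z k \<omega>)\<^sup>2 * ey \<omega> $ m)"
    and "integrable M (\<lambda>\<omega>. ey \<omega> $ m * ey \<omega> $ k)"
    by (intro integrable_mult_square_integrable square_integrable_proj_sq square_integrable_ey)+
  ultimately have "expectation (\<lambda>\<omega>. obs \<omega> $ m * obs \<omega> $ k)
      = expectation (\<lambda>\<omega>. (?z m \<omega>)\<^sup>2 * (?z k \<omega>)\<^sup>2) + expectation (\<lambda>\<omega>. (?z m \<omega>)\<^sup>2 * ey \<omega> $ k)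
        + expectation (\<lambda>\<omega>. (?z k \<omega>)\<^sup>2 * ey \<omega> $ m) + expectation (\<lambda>\<omega>. ey \<omega> $ m * ey \<omega> $ k)"
    by simp
  also have "\<dots> = (Cz $ m $ m * Cz $ k $ k + 2 * (Cz $ m $ k)\<^sup>2) + Cz $ m $ m * eybar $ k
      + Cz $ k $ k * eybar $ m + (Cey $ m $ k + eybar $ m * eybar $ k)"
    by (simp only: proj.expectation_S_sq_mult_sq expectation_proj_sq_mult_ey
        expectation_gaussian_vec_mult[OF gaussian_ey] proj_cov_z_z)
  also have "\<dots> = obs_cov $ m $ k + obs_mean $ m * obs_mean $ k"
    by (simp add: obs_cov_def obs_mean_def power2_eq_square algebra_simps)
  finally show ?thesis .
qed

lemma second_order_observation_obs:
  "invertible obs_cov \<Longrightarrow> second_order_observation M obs obs_mean obs_cov"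
  by unfold_locales (simp_all add: square_integrable_obs expectation_obs expectation_obs_mult)

lemma outer_x_moments:
  shows "square_integrable (\<lambda>\<omega>. outer (x \<omega>) (x \<omega>) $ i $ j)"
    and "expectation (\<lambda>\<omega>. outer (x \<omega>) (x \<omega>) $ i $ j) = (\<sigma>x\<^sup>2 *\<^sub>R mat 1) $ i $ j"
    and "expectation (\<lambda>\<omega>. outer (x \<omega>) (x \<omega>) $ i $ j * obs \<omega> $ m)
          = (\<sigma>x\<^sup>2 *\<^sub>R mat 1) $ i $ j * obs_mean $ m + cross_cov m $ i $ j"
proof -
  let ?xi = "proj (axis i 1, 0)" and ?xj = "proj (axis j 1, 0)" and ?z = "proj (A $ m, axis m 1)"
  have outer: "outer (x \<omega>) (x \<omega>) $ i $ j = ?xi \<omega> * ?xj \<omega>" for \<omega>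
    by (simp add: outer_def x_component)
  have sq: "square_integrable (\<lambda>\<omega>. ?xi \<omega> * ?xj \<omega>)"
    by (intro square_integrable_mult square_integrable_proj_sq measurable_proj)
  then show "square_integrable (\<lambda>\<omega>. outer (x \<omega>) (x \<omega>) $ i $ j)"
    by (simp add: outer)
  show "expectation (\<lambda>\<omega>. outer (x \<omega>) (x \<omega>) $ i $ j) = (\<sigma>x\<^sup>2 *\<^sub>R mat 1) $ i $ j"
    by (simp add: outer expectation_proj_mult proj_cov_x_x)
  have "(\<lambda>\<omega>. outer (x \<omega>) (x \<omega>) $ i $ j * obs \<omega> $ m)
      = (\<lambda>\<omega>. ?xi \<omega> * ?xj \<omega> * (?z \<omega>)\<^sup>2 + ?xi \<omega> * ?xj \<omega> * ey \<omega> $ m)"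
    by (simp add: fun_eq_iff outer obs_component algebra_simps)
  moreover have "integrable M (\<lambda>\<omega>. ?xi \<omega> * ?xj \<omega> * (?z \<omega>)\<^sup>2)"
    and "integrable M (\<lambda>\<omega>. ?xi \<omega> * ?xj \<omega> * ey \<omega> $ m)"
    by (intro integrable_mult_square_integrable sq square_integrable_proj_sq square_integrable_ey)+
  ultimately have "expectation (\<lambda>\<omega>. outer (x \<omega>) (x \<omega>) $ i $ j * obs \<omega> $ m)
      = expectation (\<lambda>\<omega>. ?xi \<omega> * ?xj \<omega> * (?z \<omega>)\<^sup>2) + expectation (\<lambda>\<omega>. ?xi \<omega> * ?xj \<omega> * ey \<omega> $ m)"
    by simp
  also have "\<dots> = (\<sigma>x\<^sup>2 *\<^sub>R mat 1) $ i $ j * Cz $ m $ m + 2 * (\<sigma>x\<^sup>2 * A $ m $ i * (\<sigma>x\<^sup>2 * A $ m $ j))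
      + (\<sigma>x\<^sup>2 *\<^sub>R mat 1) $ i $ j * eybar $ m"
    by (simp only: proj.expectation_S_mult_mult_sq expectation_proj_mult_ey proj_cov_x_x proj_cov_x_z
        proj_cov_z_z)
  also have "\<dots> = (\<sigma>x\<^sup>2 *\<^sub>R mat 1) $ i $ j * obs_mean $ m + cross_cov m $ i $ j"
    by (simp add: obs_mean_def cross_cov_def outer_def power2_eq_square power4_eq_xxxx algebra_simps)
  finally show "expectation (\<lambda>\<omega>. outer (x \<omega>) (x \<omega>) $ i $ j * obs \<omega> $ m)
      = (\<sigma>x\<^sup>2 *\<^sub>R mat 1) $ i $ j * obs_mean $ m + cross_cov m $ i $ j" .
qed

end

theorem mainTheorem7:
  fixes M :: "'s measure"
    and A :: "real^'n^'m"
    and \<sigma>x :: real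
    and Cez Cey :: "real^'m^'m"
    and eybar :: "real^'m"
    and x :: "'s \<Rightarrow> real^'n"
    and ez ey :: "'s \<Rightarrow> real^'m"
  assumes P: "prob_space M"
    and gx: "gaussian_vec M x 0 (\<sigma>x^2 *\<^sub>R mat 1)"
    and gez: "gaussian_vec M ez 0 Cez"
    and gey: "gaussian_vec M ey eybar Cey"
    and ind: "indep3 M x ez ey"
  defines "y \<equiv> (\<lambda>\<omega>. \<chi> m. ((A *v x \<omega> + ez \<omega>) $ m)^2 + ey \<omega> $ m)"
    and "Cz \<equiv> \<sigma>x^2 *\<^sub>R (A ** transpose A) + Cez"
  defines "ybar \<equiv> (\<chi> m. Cz $ m $ m) + eybar"
    and "T \<equiv> (\<chi> m m'. 2 * (Cz $ m $ m' * Cz $ m $ m')) + Cey"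
  defines "t \<equiv> (\<lambda>\<omega>. matrix_inv T *v (y \<omega> - ybar))"
    and "V \<equiv> (\<lambda>m. (2 * \<sigma>x^4) *\<^sub>R outer (A $ m) (A $ m))"
  defines "D \<equiv> (\<lambda>\<omega>. \<sigma>x^2 *\<^sub>R mat 1 + (\<Sum>m\<in>UNIV. t \<omega> $ m *\<^sub>R V m))"
    and "mse \<equiv> (\<lambda>E :: 's \<Rightarrow> real^'n^'n.
                 prob_space.expectation M (\<lambda>\<omega>. frob_sq (E \<omega> - outer (x \<omega>) (x \<omega>))))"
  assumes Tinv: "invertible T"
  shows "(\<exists>W0 W. \<forall>\<omega>. D \<omega> = W0 + (\<Sum>m\<in>UNIV. y \<omega> $ m *\<^sub>R W m))
         \<and> (\<forall>(W0 :: real^'n^'n) (W :: 'm \<Rightarrow> real^'n^'n).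
               mse D \<le> mse (\<lambda>\<omega>. W0 + (\<Sum>m\<in>UNIV. y \<omega> $ m *\<^sub>R W m))
             \<and> (mse (\<lambda>\<omega>. W0 + (\<Sum>m\<in>UNIV. y \<omega> $ m *\<^sub>R W m)) = mse D
                  \<longrightarrow> (AE \<omega> in M. W0 + (\<Sum>m\<in>UNIV. y \<omega> $ m *\<^sub>R W m) = D \<omega>)))
         \<and> mse D = prob_space.expectation M
                      (\<lambda>\<omega>. frob_sq (outer (x \<omega>) (x \<omega>) - \<sigma>x^2 *\<^sub>R mat 1))
                    - (\<Sum>m\<in>UNIV. \<Sum>m'\<in>UNIV. matrix_inv T $ m $ m' * trace (transpose (V m) ** V m'))"
proof -
  interpret Q: quadratic_observation_model M \<sigma>x Cez Cey eybar x ez ey A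
    using P gx gez gey ind
    by (simp add: quadratic_observation_model_def gaussian_observation_model_def
        gaussian_observation_model_axioms_def)
  have model: "y = Q.obs" "ybar = Q.obs_mean" "T = Q.obs_cov" "V = Q.cross_cov"
    unfolding y_def ybar_def T_def V_def Cz_def Q.obs_def Q.obs_mean_def Q.obs_cov_def Q.cross_cov_def Q.Cz_def
    by simp_all
  interpret O: second_order_observation M y ybar T
    using Q.second_order_observation_obs Tinv unfolding model by blast
  have target: "O.target_moments (\<lambda>\<omega>. outer (x \<omega>) (x \<omega>) $ i $ j) ((\<sigma>x\<^sup>2 *\<^sub>R mat 1) $ i $ j) (\<lambda>m. V m $ i $ j)"
    for i j
    unfolding O.target_moments_def using Q.outer_x_moments by (simp add: model)
  have D: "D = O.lmmse_matrix (\<sigma>x\<^sup>2 *\<^sub>R mat 1) V"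
    unfolding D_def t_def O.lmmse_matrix_def ..
  show ?thesis
    unfolding mse_def D
    using O.lmmse_matrix_affine O.mse_lmmse_matrix_le[OF target] O.mse_eq_lmmse_matrix_imp_AE_eq[OF target]
      O.mse_lmmse_matrix[OF target]
    by (simp add: O.affine_matrix_estimator_def fun_eq_iff)
qed

end
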